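(* For any distribution $F$ on $[0,\infty)$, any arrivals $0<\sigma_1<\cdots<\sigma_m$, and any probability vectors $\mathbf p_1=(p_{11},\dots,p_{1m})$, $\mathbf p_2=(p_{21},\dots,p_{2m})\in[0,1]^m$ with $p_{1t}\le p_{2t}$ for every $t\in[m]$, we have $r(F,\boldsymbol\sigma,\mathbf p_1)\le r(F,\boldsymbol\sigma,\mathbf p_2)$.
   Context: Random $(F,\boldsymbol\sigma,\mathbf p)$ process: a single unit of a resource starts at time $0$ available. If the unit is available just prior to $\sigma_t$, then with probability $p_t$ (independently) it becomes in-use for a duration $d$ drawn independently from $F$, i.e. in use on $(\sigma_t,\sigma_t+d)$, available again at $\sigma_t+d$. Each switch from available to in-use earns reward $1$; $r(F,\boldsymbol\sigma,\mathbf p)$ is the expected total reward. *)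

theory Defs
  imports "HOL-Probability.Probability"
begin

text \<open>Sample outcome at arrival t (0-indexed): a pair (coin, duration), where the coin is
  True with probability p t (the unit would become in-use if available) and the duration is
  drawn from F.\<close>

fun run_process :: "(nat \<Rightarrow> real) \<Rightarrow> (nat \<Rightarrow> bool \<times> real) \<Rightarrow> nat \<Rightarrow> real \<times> nat" where
  "run_process \<sigma> \<omega> 0 = (0, 0)"
| "run_process \<sigma> \<omega> (Suc k) =
     (let (a, c) = run_process \<sigma> \<omega> k in
        if a \<le> \<sigma> k \<and> fst (\<omega> k) then (\<sigma> k + snd (\<omega> k), Suc c) else (a, c))"

text \<open>First component: the time from which the unit is available again; second component:
  number of switches from available to in-use among the first k arrivals.\<close>

definition process_space :: "real measure \<Rightarrow> nat \<Rightarrow> (nat \<Rightarrow> real) \<Rightarrow> (nat \<Rightarrow> bool \<times> real) measure" where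
  "process_space F m p =
     PiM {..<m} (\<lambda>t. measure_pmf (bernoulli_pmf (p t)) \<Otimes>\<^sub>M F)"

definition expected_reward :: "real measure \<Rightarrow> nat \<Rightarrow> (nat \<Rightarrow> real) \<Rightarrow> (nat \<Rightarrow> real) \<Rightarrow> real" where
  "expected_reward F m \<sigma> p =
     (\<integral>\<omega>. real (snd (run_process \<sigma> \<omega> m)) \<partial>(process_space F m p))"

end

theory Submission
  imports Defs
begin

text \<open>
  Let \<open>V\<^sub>k(a)\<close> be the expected reward collected at the arrivals \<open>k, \<dots>, m - 1\<close> when the
  unit is available from time \<open>a\<close> on. Conditioning on the outcome at arrival \<open>k\<close> gives the
  Bellman recursion \<open>V\<^sub>k(a) = p\<^sub>k E[1 + V\<^sub>k\<^sub>+\<^sub>1(\<sigma>\<^sub>k + D)] + (1 - p\<^sub>k) V\<^sub>k\<^sub>+\<^sub>1(a)\<close> for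
  \<open>a \<le> \<sigma>\<^sub>k\<close> and \<open>V\<^sub>k(a) = V\<^sub>k\<^sub>+\<^sub>1(a)\<close> otherwise. A backward induction shows that every
  \<open>V\<^sub>k\<close> is antitone and that accepting is never worse than letting an arrival pass:
  \<open>V\<^sub>k\<^sub>+\<^sub>1(a) \<le> E[1 + V\<^sub>k\<^sub>+\<^sub>1(\<sigma>\<^sub>k + D)]\<close> for \<open>a \<le> \<sigma>\<^sub>k\<close>. So raising \<open>p\<^sub>k\<close> moves weight
  onto the better branch of the recursion, and a second backward induction compares the
  value functions for \<open>p\<^sub>1\<close> and \<open>p\<^sub>2\<close>.
\<close>

lemma ennreal_mix_weight_mono:
  fixes X Q :: ennreal
  assumes "0 \<le> q1" "q1 \<le> q2" "q2 \<le> 1" and "X \<le> Q"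
  shows "ennreal q1 * Q + ennreal (1 - q1) * X \<le> ennreal q2 * Q + ennreal (1 - q2) * X"
proof -
  have "ennreal q1 * Q + ennreal (1 - q1) * X =
      ennreal q1 * Q + ennreal (q2 - q1) * X + ennreal (1 - q2) * X"
    using assms(1-3) by (simp add: add.assoc flip: distrib_right ennreal_plus)
  also have "\<dots> \<le> ennreal q1 * Q + ennreal (q2 - q1) * Q + ennreal (1 - q2) * X"
    using assms(4) by (intro add_mono mult_left_mono) auto
  also have "\<dots> = ennreal q2 * Q + ennreal (1 - q2) * X"
    using assms(1-3) by (simp flip: distrib_right ennreal_plus)
  finally show ?thesis .
qed

lemma nn_integral_coin_duration:
  assumes "prob_space F" and "0 \<le> q" "q \<le> 1" and [measurable]: "f \<in> borel_measurable F"
  shows "(\<integral>\<^sup>+y. (if fst y then f (snd y) else c) \<partial>(measure_pmf (bernoulli_pmf q) \<Otimes>\<^sub>M F))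
    = ennreal q * (\<integral>\<^sup>+d. f d \<partial>F) + ennreal (1 - q) * c"
proof -
  interpret F: prob_space F by fact
  have "(\<integral>\<^sup>+y. (if fst y then f (snd y) else c) \<partial>(measure_pmf (bernoulli_pmf q) \<Otimes>\<^sub>M F))
      = (\<integral>\<^sup>+b. (\<integral>\<^sup>+d. (if b then f d else c) \<partial>F) \<partial>bernoulli_pmf q)"
    using F.nn_integral_fst[of "\<lambda>y. if fst y then f (snd y) else c" "bernoulli_pmf q"]
    unfolding snd_conv fst_conv by simp
  also have "\<dots> = (\<integral>\<^sup>+b. (if b then \<integral>\<^sup>+d. f d \<partial>F else c) \<partial>bernoulli_pmf q)"
    by (intro nn_integral_cong) (simp add: F.emeasure_space_1)
  also have "\<dots> = ennreal q * (\<integral>\<^sup>+d. f d \<partial>F) + ennreal (1 - q) * c"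
    using assms(2,3)
    by (subst nn_integral_measure_pmf_support[of UNIV]) (auto simp: UNIV_bool mult.commute)
  finally show ?thesis .
qed

definition bellman :: "real measure \<Rightarrow> real \<Rightarrow> real \<Rightarrow> (real \<Rightarrow> ennreal) \<Rightarrow> real \<Rightarrow> ennreal" where
  "bellman F s q V a =
     (if a \<le> s then ennreal q * (\<integral>\<^sup>+d. (1 + V (s + d)) \<partial>F) + ennreal (1 - q) * V a else V a)"

text \<open>
  Being free from \<open>x\<close> on is worth at most accepting at any \<open>t \<in> [x, s]\<close>, i.e. earning 1 and
  being busy for a fresh duration. This is what makes larger acceptance probabilities better.
\<close>

definition accept_dominates :: "real measure \<Rightarrow> real \<Rightarrow> (real \<Rightarrow> ennreal) \<Rightarrow> bool" where
  "accept_dominates F s V \<longleftrightarrow> (\<forall>x t. x \<le> t \<longrightarrow> t \<le> s \<longrightarrow> V x \<le> (\<integral>\<^sup>+d. (1 + V (t + d)) \<partial>F))"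

lemma accept_dominates_le: "accept_dominates F s V \<Longrightarrow> s' \<le> s \<Longrightarrow> accept_dominates F s' V"
  by (auto simp: accept_dominates_def)

lemma accept_dominates_zero: "accept_dominates F s (\<lambda>_. 0)"
  by (simp add: accept_dominates_def)

lemma le_bellman:
  assumes "0 \<le> q" "q \<le> 1" and "accept_dominates F s V"
  shows "V a \<le> bellman F s q V a"
  using ennreal_mix_weight_mono[of 0 q, OF _ assms(1,2)] assms(3)
  by (auto simp: bellman_def accept_dominates_def)

lemma antimono_bellman:
  assumes "0 \<le> q" "q \<le> 1" and "antimono V" and "accept_dominates F s V"
  shows "antimono (bellman F s q V)"
proof (rule antimonoI)
  fix a b :: real
  assume "a \<le> b"
  show "bellman F s q V b \<le> bellman F s q V a"
  proof (cases "b \<le> s")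
    case True
    with \<open>a \<le> b\<close> \<open>antimono V\<close> show ?thesis
      by (auto simp: bellman_def intro: add_left_mono mult_left_mono dest: antimonoD)
  next
    case False
    with \<open>a \<le> b\<close> \<open>antimono V\<close> have "bellman F s q V b \<le> V a"
      by (simp add: bellman_def antimonoD)
    also have "\<dots> \<le> bellman F s q V a"
      using assms(1,2,4) by (rule le_bellman)
    finally show ?thesis .
  qed
qed

lemma accept_dominates_bellman:
  assumes "0 \<le> q" "q \<le> 1" and "antimono V" and "accept_dominates F s V"
  shows "accept_dominates F s (bellman F s q V)"
  unfolding accept_dominates_def
proof (intro allI impI)
  fix x t :: real
  assume "x \<le> t" "t \<le> s"
  define Q where "Q = (\<integral>\<^sup>+d. (1 + V (s + d)) \<partial>F)"
  have "V x \<le> Q"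
    using assms(4) \<open>x \<le> t\<close> \<open>t \<le> s\<close> by (auto simp: accept_dominates_def Q_def)
  then have "bellman F s q V x \<le> Q"
    using ennreal_mix_weight_mono[of q 1, OF assms(1,2)] \<open>x \<le> t\<close> \<open>t \<le> s\<close>
    by (simp add: bellman_def Q_def)
  also have "Q \<le> (\<integral>\<^sup>+d. (1 + bellman F s q V (t + d)) \<partial>F)"
    unfolding Q_def
  proof (intro nn_integral_mono add_left_mono)
    fix d
    have "V (s + d) \<le> bellman F s q V (s + d)"
      using assms(1,2,4) by (rule le_bellman)
    also have "\<dots> \<le> bellman F s q V (t + d)"
      using antimono_bellman[OF assms] \<open>t \<le> s\<close> by (simp add: antimonoD)
    finally show "V (s + d) \<le> bellman F s q V (t + d)" .
  qed
  finally show "bellman F s q V x \<le> (\<integral>\<^sup>+d. (1 + bellman F s q V (t + d)) \<partial>F)" .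
qed

lemma bellman_mono:
  assumes "0 \<le> q1" "q1 \<le> q2" "q2 \<le> 1" and "\<And>x. V1 x \<le> V2 x" and "accept_dominates F s V2"
  shows "bellman F s q1 V1 a \<le> bellman F s q2 V2 a"
proof (cases "a \<le> s")
  case True
  let ?Q = "\<lambda>V. \<integral>\<^sup>+d. (1 + V (s + d)) \<partial>F"
  have "?Q V1 \<le> ?Q V2"
    by (intro nn_integral_mono add_left_mono assms(4))
  then have "ennreal q1 * ?Q V1 + ennreal (1 - q1) * V1 a \<le>
      ennreal q1 * ?Q V2 + ennreal (1 - q1) * V2 a"
    by (intro add_mono mult_left_mono assms(4)) auto
  also have "\<dots> \<le> ennreal q2 * ?Q V2 + ennreal (1 - q2) * V2 a"
    using assms(5) True by (intro ennreal_mix_weight_mono assms(1-3)) (auto simp: accept_dominates_def)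
  finally show ?thesis
    using True by (simp add: bellman_def)
qed (simp add: bellman_def assms(4))

fun path_reward :: "(nat \<Rightarrow> real) \<Rightarrow> nat \<Rightarrow> nat \<Rightarrow> real \<Rightarrow> (nat \<Rightarrow> bool \<times> real) \<Rightarrow> real" where
  "path_reward \<sigma> k 0 a \<omega> = 0"
| "path_reward \<sigma> k (Suc n) a \<omega> =
     (if a \<le> \<sigma> k \<and> fst (\<omega> k) then 1 + path_reward \<sigma> (Suc k) n (\<sigma> k + snd (\<omega> k)) \<omega>
      else path_reward \<sigma> (Suc k) n a \<omega>)"

lemma path_reward_nonneg: "0 \<le> path_reward \<sigma> k n a \<omega>"
  by (induction n arbitrary: k a) auto

lemma path_reward_le: "path_reward \<sigma> k n a \<omega> \<le> n"
proof (induction n arbitrary: k a)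
  case (Suc n)
  then show ?case
    by (smt (verit) of_nat_Suc path_reward.simps(2))
qed simp

lemma path_reward_fun_upd_before:
  "j < k \<Longrightarrow> path_reward \<sigma> k n a (fun_upd \<omega> j y) = path_reward \<sigma> k n a \<omega>"
  by (induction n arbitrary: k a) auto

lemma run_process_add:
  "real (snd (run_process \<sigma> \<omega> (j + n))) =
     real (snd (run_process \<sigma> \<omega> j)) + path_reward \<sigma> j n (fst (run_process \<sigma> \<omega> j)) \<omega>"
proof (induction n arbitrary: j)
  case (Suc n)
  then show ?case
    using Suc.IH[of "Suc j"] by (cases "run_process \<sigma> \<omega> j") auto
qed simp

definition arrival_measure :: "real measure \<Rightarrow> (nat \<Rightarrow> real) \<Rightarrow> nat \<Rightarrow> (bool \<times> real) measure" where
  "arrival_measure F p k = measure_pmf (bernoulli_pmf (p k)) \<Otimes>\<^sub>M F"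

lemma prob_space_arrival_measure: "prob_space F \<Longrightarrow> prob_space (arrival_measure F p k)"
  unfolding arrival_measure_def by (intro prob_space_pair prob_space_measure_pmf)

lemma measurable_arrival_coin [measurable]:
  "fst \<in> measurable (arrival_measure F p k) (count_space UNIV)"
  unfolding arrival_measure_def by simp

lemma measurable_arrival_duration [measurable]:
  "sets F = sets borel \<Longrightarrow> snd \<in> borel_measurable (arrival_measure F p k)"
  unfolding arrival_measure_def by (simp cong: measurable_cong_sets)

lemma borel_measurable_path_reward:
  assumes "sets F = sets borel" and "{k..<k + n} \<subseteq> I"
    and "g \<in> borel_measurable N" and "X \<in> measurable N (PiM I (arrival_measure F p))"
  shows "(\<lambda>x. path_reward \<sigma> k n (g x) (X x)) \<in> borel_measurable N"
  using assms(2,3)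
proof (induction n arbitrary: k g)
  case (Suc n)
  note [measurable] = Suc.prems(2) assms(4) measurable_arrival_duration[OF assms(1)]
  have [measurable]: "(\<lambda>x. X x k) \<in> measurable N (arrival_measure F p k)"
    using Suc.prems(1) by (intro measurable_compose[OF assms(4)] measurable_component_singleton) auto
  have [measurable]: "(\<lambda>x. path_reward \<sigma> (Suc k) n (h x) (X x)) \<in> borel_measurable N"
    if "h \<in> borel_measurable N" for h
    using Suc.prems(1) that by (intro Suc.IH) auto
  show ?case
    by simp measurable
qed simp

definition reward_to_go ::
  "real measure \<Rightarrow> (nat \<Rightarrow> real) \<Rightarrow> (nat \<Rightarrow> real) \<Rightarrow> nat \<Rightarrow> nat \<Rightarrow> real \<Rightarrow> ennreal" where
  "reward_to_go F p \<sigma> m k a =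
     (\<integral>\<^sup>+\<omega>. ennreal (path_reward \<sigma> k (m - k) a \<omega>) \<partial>PiM {k..<m} (arrival_measure F p))"

lemma reward_to_go_beyond: "m \<le> k \<Longrightarrow> reward_to_go F p \<sigma> m k a = 0"
  by (simp add: reward_to_go_def)

lemma borel_measurable_reward_to_go:
  assumes "prob_space F" and "sets F = sets borel"
  shows "reward_to_go F p \<sigma> m k \<in> borel_measurable borel"
proof -
  let ?P = "PiM {k..<m} (arrival_measure F p)"
  interpret P: prob_space ?P
    by (intro prob_space_PiM prob_space_arrival_measure assms(1))
  have "(\<lambda>x. path_reward \<sigma> k (m - k) (fst x) (snd x)) \<in> borel_measurable (borel \<Otimes>\<^sub>M ?P)"
    by (rule borel_measurable_path_reward[OF assms(2), where I="{k..<m}"]) auto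
  then have "(\<lambda>a. \<integral>\<^sup>+\<omega>. ennreal (path_reward \<sigma> k (m - k) a \<omega>) \<partial>?P) \<in> borel_measurable borel"
    by (intro P.borel_measurable_nn_integral) (simp add: case_prod_beta')
  then show ?thesis
    by (simp add: reward_to_go_def[abs_def])
qed

lemma reward_to_go_condition_first:
  fixes p \<sigma> :: "nat \<Rightarrow> real"
  assumes F: "prob_space F" "sets F = sets borel" and "k < m"
  defines "V \<equiv> reward_to_go F p \<sigma> m (Suc k)"
  shows "reward_to_go F p \<sigma> m k a =
    (\<integral>\<^sup>+y. (if a \<le> \<sigma> k \<and> fst y then 1 + V (\<sigma> k + snd y) else V a) \<partial>arrival_measure F p k)"
proof -
  let ?M = "arrival_measure F p" and ?P = "PiM {Suc k..<m} (arrival_measure F p)"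
  interpret product_prob_space ?M "{}"
    by (intro product_prob_spaceI prob_space_arrival_measure F(1))
  interpret rest: prob_space ?P
    by (intro prob_space_PiM prob_space_arrival_measure F(1))
  define n where "n = m - Suc k"
  have V: "V b = (\<integral>\<^sup>+\<omega>. ennreal (path_reward \<sigma> (Suc k) n b \<omega>) \<partial>?P)" for b
    by (simp add: V_def reward_to_go_def n_def)
  have [measurable]: "(\<lambda>\<omega>. path_reward \<sigma> (Suc k) n b \<omega>) \<in> borel_measurable ?P" for b
    by (rule borel_measurable_path_reward[OF F(2), where I="{Suc k..<m}" and p=p])
      (auto simp: n_def)
  have [measurable]:
    "(\<lambda>\<omega>. path_reward \<sigma> k (Suc n) a \<omega>) \<in> borel_measurable (PiM (insert k {Suc k..<m}) ?M)"
    by (rule borel_measurable_path_reward[OF F(2), where I="insert k {Suc k..<m}" and p=p])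
      (auto simp: n_def)
  have upd: "path_reward \<sigma> k (Suc n) a (fun_upd \<omega> k y) =
      (if a \<le> \<sigma> k \<and> fst y then 1 + path_reward \<sigma> (Suc k) n (\<sigma> k + snd y) \<omega>
       else path_reward \<sigma> (Suc k) n a \<omega>)" for \<omega> y
    by (simp add: path_reward_fun_upd_before)
  have "{k..<m} = insert k {Suc k..<m}" and "m - k = Suc n"
    using \<open>k < m\<close> by (auto simp: n_def)
  then have "reward_to_go F p \<sigma> m k a
      = (\<integral>\<^sup>+\<omega>. ennreal (path_reward \<sigma> k (Suc n) a \<omega>) \<partial>PiM (insert k {Suc k..<m}) ?M)"
    by (simp add: reward_to_go_def)
  also have "\<dots> = (\<integral>\<^sup>+y. \<integral>\<^sup>+\<omega>. ennreal (path_reward \<sigma> k (Suc n) a (fun_upd \<omega> k y)) \<partial>?P \<partial>?M k)"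
    by (rule product_nn_integral_insert_rev) (auto simp del: path_reward.simps)
  also have "\<dots> = (\<integral>\<^sup>+y. (if a \<le> \<sigma> k \<and> fst y then 1 + V (\<sigma> k + snd y) else V a) \<partial>?M k)"
  proof (intro nn_integral_cong)
    fix y :: "bool \<times> real"
    show "(\<integral>\<^sup>+\<omega>. ennreal (path_reward \<sigma> k (Suc n) a (fun_upd \<omega> k y)) \<partial>?P)
        = (if a \<le> \<sigma> k \<and> fst y then 1 + V (\<sigma> k + snd y) else V a)"
      unfolding upd by (cases "a \<le> \<sigma> k"; cases "fst y")
        (simp_all add: V path_reward_nonneg nn_integral_add rest.emeasure_space_1)
  qed
  finally show ?thesis .
qed

lemma reward_to_go_Suc:
  assumes F: "prob_space F" "sets F = sets borel" and "k < m" and "0 \<le> p k" "p k \<le> 1"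
  shows "reward_to_go F p \<sigma> m k = bellman F (\<sigma> k) (p k) (reward_to_go F p \<sigma> m (Suc k))"
proof (rule ext)
  fix a
  let ?V = "reward_to_go F p \<sigma> m (Suc k)"
  show "reward_to_go F p \<sigma> m k a = bellman F (\<sigma> k) (p k) ?V a"
  proof (cases "a \<le> \<sigma> k")
    case True
    have "(\<lambda>d. 1 + ?V (\<sigma> k + d)) \<in> borel_measurable borel"
      using borel_measurable_reward_to_go[OF F] by measurable
    then have "(\<lambda>d. 1 + ?V (\<sigma> k + d)) \<in> borel_measurable F"
      by (simp cong: measurable_cong_sets[OF F(2) refl])
    note coin = nn_integral_coin_duration[OF F(1) assms(4,5) this]
    from True show ?thesis
      unfolding reward_to_go_condition_first[OF F \<open>k < m\<close>] bellman_def arrival_measure_def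
      by (simp add: coin)
  next
    case False
    interpret prob_space "arrival_measure F p k"
      by (rule prob_space_arrival_measure[OF F(1)])
    from False show ?thesis
      unfolding reward_to_go_condition_first[OF F \<open>k < m\<close>]
      by (simp add: bellman_def emeasure_space_1)
  qed
qed

lemma antimono_accept_dominates_reward_to_go:
  assumes F: "prob_space F" "sets F = sets borel"
    and \<sigma>: "\<And>t. Suc t < m \<Longrightarrow> \<sigma> t \<le> \<sigma> (Suc t)"
    and p: "\<And>t. t < m \<Longrightarrow> 0 \<le> p t \<and> p t \<le> 1"
    and "k < m"
  shows "antimono (reward_to_go F p \<sigma> m (Suc k)) \<and>
    accept_dominates F (\<sigma> k) (reward_to_go F p \<sigma> m (Suc k))"
proof -
  have "k \<le> m - 1"
    using \<open>k < m\<close> by simp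
  then show ?thesis
  proof (induction k rule: inc_induct)
    case base
    then show ?case
      using \<open>k < m\<close> by (simp add: reward_to_go_beyond antimono_def accept_dominates_zero)
  next
    case (step k)
    then have "Suc k < m" and "0 \<le> p (Suc k)" "p (Suc k) \<le> 1"
      using p by auto
    note W = reward_to_go_Suc[where p=p, OF F \<open>Suc k < m\<close> this(2,3)]
    show ?case
      unfolding W using step.IH \<sigma>[OF \<open>Suc k < m\<close>] \<open>0 \<le> p (Suc k)\<close> \<open>p (Suc k) \<le> 1\<close>
      by (auto intro: antimono_bellman accept_dominates_bellman accept_dominates_le)
  qed
qed

lemma reward_to_go_mono_prob:
  assumes F: "prob_space F" "sets F = sets borel"
    and \<sigma>: "\<And>t. Suc t < m \<Longrightarrow> \<sigma> t \<le> \<sigma> (Suc t)"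
    and p1: "\<And>t. t < m \<Longrightarrow> 0 \<le> p1 t \<and> p1 t \<le> 1"
    and p2: "\<And>t. t < m \<Longrightarrow> 0 \<le> p2 t \<and> p2 t \<le> 1"
    and p12: "\<And>t. t < m \<Longrightarrow> p1 t \<le> p2 t"
    and "k \<le> m"
  shows "reward_to_go F p1 \<sigma> m k a \<le> reward_to_go F p2 \<sigma> m k a"
  using \<open>k \<le> m\<close>
proof (induction k arbitrary: a rule: inc_induct)
  case base
  then show ?case
    by (simp add: reward_to_go_beyond)
next
  case (step k)
  then have "k < m" by simp
  from p1[OF this] p2[OF this] have bounds: "0 \<le> p1 k" "p1 k \<le> 1" "0 \<le> p2 k" "p2 k \<le> 1"
    by auto
  have "accept_dominates F (\<sigma> k) (reward_to_go F p2 \<sigma> m (Suc k))"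
    using antimono_accept_dominates_reward_to_go[where p=p2 and \<sigma>=\<sigma>, OF F \<sigma> p2 \<open>k < m\<close>] by blast
  then show ?case
    unfolding reward_to_go_Suc[where p=p1, OF F \<open>k < m\<close> bounds(1,2)]
      reward_to_go_Suc[where p=p2, OF F \<open>k < m\<close> bounds(3,4)]
    using bounds p12[OF \<open>k < m\<close>] step.IH by (intro bellman_mono) auto
qed

lemma expected_reward_eq_reward_to_go:
  assumes "sets F = sets borel"
  shows "expected_reward F m \<sigma> p = enn2real (reward_to_go F p \<sigma> m 0 0)"
proof -
  have "process_space F m p = PiM {0..<m} (arrival_measure F p)"
    unfolding process_space_def arrival_measure_def atLeast0LessThan ..
  moreover have "real (snd (run_process \<sigma> \<omega> m)) = path_reward \<sigma> 0 m 0 \<omega>" for \<omega>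
    using run_process_add[of \<sigma> \<omega> 0 m] by simp
  moreover have "(\<lambda>\<omega>. path_reward \<sigma> 0 m 0 \<omega>) \<in> borel_measurable (PiM {0..<m} (arrival_measure F p))"
    by (rule borel_measurable_path_reward[OF assms, where p=p]) auto
  ultimately show ?thesis
    unfolding expected_reward_def reward_to_go_def
    by (simp add: integral_eq_nn_integral path_reward_nonneg)
qed

lemma reward_to_go_finite:
  assumes "prob_space F"
  shows "reward_to_go F p \<sigma> m k a < \<top>"
proof -
  interpret prob_space "PiM {k..<m} (arrival_measure F p)"
    by (intro prob_space_PiM prob_space_arrival_measure assms)
  have "reward_to_go F p \<sigma> m k a \<le> (\<integral>\<^sup>+\<omega>. ennreal (m - k) \<partial>PiM {k..<m} (arrival_measure F p))"
    unfolding reward_to_go_def by (intro nn_integral_mono ennreal_leI path_reward_le)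
  then show ?thesis
    by (simp add: emeasure_space_1 order.strict_trans1)
qed

theorem lemma4:
  fixes F :: "real measure" and m :: nat and \<sigma> p1 p2 :: "nat \<Rightarrow> real"
  assumes "prob_space F" and "sets F = sets borel" and "AE x in F. 0 \<le> x"
    and "0 < \<sigma> 0" and "\<And>t. Suc t < m \<Longrightarrow> \<sigma> t < \<sigma> (Suc t)"
    and "\<And>t. t < m \<Longrightarrow> 0 \<le> p1 t \<and> p1 t \<le> 1"
    and "\<And>t. t < m \<Longrightarrow> 0 \<le> p2 t \<and> p2 t \<le> 1"
    and "\<And>t. t < m \<Longrightarrow> p1 t \<le> p2 t"
  shows "expected_reward F m \<sigma> p1 \<le> expected_reward F m \<sigma> p2"
proof -
  have "reward_to_go F p1 \<sigma> m 0 0 \<le> reward_to_go F p2 \<sigma> m 0 0"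
    by (rule reward_to_go_mono_prob) (use assms in \<open>auto intro: less_imp_le\<close>)
  then show ?thesis
    unfolding expected_reward_eq_reward_to_go[OF assms(2)]
    by (rule enn2real_mono) (rule reward_to_go_finite[OF assms(1)])
qed

end
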